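(* Let $G$ be a digraph with $n$ vertices. If $G$ has a primitive spanning strict subgraph, then $G$ admits a boolean nilpotent function of class at most $n^2-2n+3$.
   Context: Digraphs may have loops but no multiple arcs; cycles are directed, and a loop is a cycle of length $1$. A digraph is primitive if it is strongly connected and the greatest common divisor of the lengths of its cycles is $1$. A spanning strict subgraph of $G$ is a subgraph with the same vertex set and a proper subset of the arcs. A boolean function on $[n]$ is a map $f:\{0,1\}^n\to\{0,1\}^n$; its (unsigned) interaction graph has an arc $(j,i)$ iff $f_i$ depends essentially on $x_j$, i.e. $f_i(a)\neq f_i(b)$ for some $a,b$ differing only in coordinate $j$. An unsigned digraph $G$ on $[n]$ admits $f$ if the interaction graph of $f$ equals $G$. $f$ is nilpotent if $f^k$ is constant for some $k\geq 0$ ($f^0=\mathrm{id}$); the least such $k$ is its class. *)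

theory Defs
  imports Main "HOL-Library.Cardinality"
begin

(* Digraphs on a finite vertex type 'v (vertex set = UNIV, n = CARD('v)),
   given by their arc set; loops allowed, no multiple arcs. *)

definition strongly_connected :: "('v \<times> 'v) set \<Rightarrow> bool" where
  "strongly_connected G \<longleftrightarrow> (\<forall>u v. (u, v) \<in> G\<^sup>*)"

(* lengths of (elementary) directed cycles; a loop is a cycle of length 1 *)
definition cycle_lengths :: "('v \<times> 'v) set \<Rightarrow> nat set" where
  "cycle_lengths G = {k. \<exists>vs. length vs = k \<and> k \<ge> 1 \<and> distinct vs \<and>
      (\<forall>i<k. (vs ! i, vs ! ((i + 1) mod k)) \<in> G)}"

definition primitive :: "('v \<times> 'v) set \<Rightarrow> bool" where
  "primitive G \<longleftrightarrow> strongly_connected G \<and> Gcd (cycle_lengths G) = 1"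

definition depends_on :: "(('v \<Rightarrow> bool) \<Rightarrow> ('v \<Rightarrow> bool)) \<Rightarrow> 'v \<Rightarrow> 'v \<Rightarrow> bool" where
  "depends_on f i j \<longleftrightarrow> (\<exists>x. f x i \<noteq> f (x(j := \<not> x j)) i)"

definition interaction_graph :: "(('v \<Rightarrow> bool) \<Rightarrow> ('v \<Rightarrow> bool)) \<Rightarrow> ('v \<times> 'v) set" where
  "interaction_graph f = {(j, i). depends_on f i j}"

definition admits :: "('v \<times> 'v) set \<Rightarrow> (('v \<Rightarrow> bool) \<Rightarrow> ('v \<Rightarrow> bool)) \<Rightarrow> bool" where
  "admits G f \<longleftrightarrow> interaction_graph f = G"

definition nilpotent_at :: "(('v \<Rightarrow> bool) \<Rightarrow> ('v \<Rightarrow> bool)) \<Rightarrow> nat \<Rightarrow> bool" where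
  "nilpotent_at f k \<longleftrightarrow> (\<exists>c. \<forall>x. (f ^^ k) x = c)"

definition nilpotent :: "(('v \<Rightarrow> bool) \<Rightarrow> ('v \<Rightarrow> bool)) \<Rightarrow> bool" where
  "nilpotent f \<longleftrightarrow> (\<exists>k. nilpotent_at f k)"

definition nil_class :: "(('v \<Rightarrow> bool) \<Rightarrow> ('v \<Rightarrow> bool)) \<Rightarrow> nat" where
  "nil_class f = (LEAST k. nilpotent_at f k)"

end

theory Submission
  imports Defs
begin

text \<open>
  Pick an arc \<open>(a, b)\<close> of \<open>G\<close> outside the primitive subgraph \<open>H\<close> and let \<open>f\<^sub>i\<close> be the
  conjunction of the states of the in-neighbours of \<open>i\<close> in \<open>G\<close>, with the literal on the arc
  \<open>(a, b)\<close> negated; its interaction graph is \<open>G\<close>. If \<open>H\<close> has a cycle of length \<open>s\<close>, then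
  (Dulmage--Mendelsohn) any two vertices are joined by \<open>H\<close>-walks of every length
  \<open>m \<ge> E = (n - s) + (n - 1) s\<close>: every vertex reaches the cycle in exactly \<open>n - s\<close> steps, and
  from a cycle vertex the powers of \<open>H\<^sup>s\<close> exhaust all vertices after \<open>n - 1\<close> rounds, because
  closed walks there have all sufficiently large lengths (their lengths have gcd 1).
  If \<open>(f\<^sup>E\<^sup>+\<^sup>1 x)\<^sub>i\<close> were true, pulling it back along walks of lengths \<open>E\<close> and \<open>E + 1\<close> ending
  in \<open>i\<close> would force \<open>x\<^sub>a\<close> to be both false (via the negated arc into \<open>b\<close>) and true. So \<open>f\<close> is
  nilpotent of class at most \<open>E + 1\<close>, which is at most \<open>n\<^sup>2 - 2n + 3\<close> for a cycle with \<open>s < n\<close>.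
\<close>

lemma funpow_chain_eq_UNIV:
  fixes F :: "'v::finite set \<Rightarrow> 'v set"
  assumes mono: "mono F" and inflating: "A \<subseteq> F A" and covering: "\<And>v. \<exists>k. v \<in> (F ^^ k) A"
  shows "(F ^^ (CARD('v) - card A)) A = UNIV"
proof -
  let ?S = "\<lambda>k. (F ^^ k) A"
  have chain: "i \<le> j \<Longrightarrow> ?S i \<subseteq> ?S j" for i j
    using funpow_mono2[OF mono _ order_refl inflating] .
  have stationary: "?S k = UNIV" if stat: "?S (Suc k) = ?S k" for k
  proof -
    have "?S (i + k) = ?S k" for i
    proof (induction i)
      case (Suc i)
      then show ?case using stat by simp
    qed simp
    then have "?S j \<subseteq> ?S k" for j
      using chain[of j "j + k"] by auto
    then show ?thesis
      using covering by blast
  qed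
  have growth: "?S k = UNIV \<or> card A + k \<le> card (?S k)" for k
  proof (induction k)
    case (Suc k)
    show ?case
    proof (cases "?S k = UNIV")
      case True
      then show ?thesis using chain[of k "Suc k"] by auto
    next
      case False
      then have "?S k \<subset> ?S (Suc k)"
        using chain[of k "Suc k"] stationary[of k] by auto
      then have "card (?S k) < card (?S (Suc k))"
        by (simp add: psubset_card_mono)
      then show ?thesis using Suc False by simp
    qed
  qed simp
  have "card A \<le> CARD('v)" "card (?S (CARD('v) - card A)) \<le> CARD('v)"
    by (simp_all add: card_mono)
  then have "?S (CARD('v) - card A) = UNIV \<or> card (?S (CARD('v) - card A)) = CARD('v)"
    using growth[of "CARD('v) - card A"] by linarith
  then show ?thesis
    using card_eq_UNIV_imp_eq_UNIV[OF finite_class.finite_UNIV] by blast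
qed

lemma Image_funpow: "((``) R ^^ k) A = (R ^^ k) `` A" for R :: "'a rel"
  by (induction k) (simp_all add: relcomp_Image)

lemma relpow_Image_eq_UNIV:
  fixes R :: "('v::finite \<times> 'v) set"
  assumes "A \<subseteq> R `` A" and "\<And>v. \<exists>k. v \<in> (R ^^ k) `` A"
  shows "(R ^^ (CARD('v) - card A)) `` A = UNIV"
  using funpow_chain_eq_UNIV[of "(``) R" A] assms
  by (simp add: Image_funpow mono_def Image_mono)

lemma relpow_converse: "(R\<inverse>) ^^ k = (R ^^ k)\<inverse>" for R :: "'a rel"
  by (induction k) (simp_all, metis converse_relcomp relpow_commute)

lemma relpow_mult: "(R ^^ m) ^^ k = R ^^ (m * k)" for R :: "'a rel"
  by (induction k) (simp_all add: relpow_add[symmetric] add.commute)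

lemma add_closed_nat_multiples:
  fixes T :: "nat set"
  assumes "0 \<in> T" and "\<And>x y. x \<in> T \<Longrightarrow> y \<in> T \<Longrightarrow> x + y \<in> T" and "x \<in> T"
  shows "k * x \<in> T"
  using assms by (induction k) auto

lemma add_closed_nat_Gcd_1_consecutive:
  fixes T :: "nat set"
  assumes zero: "0 \<in> T" and add: "\<And>x y. x \<in> T \<Longrightarrow> y \<in> T \<Longrightarrow> x + y \<in> T"
    and Gcd: "Gcd T = 1"
  obtains x where "x \<in> T" and "x + 1 \<in> T"
proof -
  define D where "D = {d. d > 0 \<and> (\<exists>x\<in>T. x + d \<in> T)}"
  have "\<not> T \<subseteq> {0}"
    using Gcd by (simp add: Gcd_0_iff [symmetric])
  then obtain t where "t \<in> T" "t > 0"
    by blast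
  then have "t \<in> D"
    unfolding D_def using zero by force
  define d where "d = (LEAST d. d \<in> D)"
  have "d \<in> D"
    unfolding d_def using \<open>t \<in> D\<close> by (rule LeastI)
  then obtain x where x: "x \<in> T" "x + d \<in> T" "d > 0"
    unfolding D_def by blast
  have "d dvd u" if u: "u \<in> T" for u
  proof (rule ccontr)
    assume "\<not> d dvd u"
    then have "u mod d > 0"
      by (simp add: dvd_eq_mod_eq_0)
    \<comment> \<open>\<open>q (x + d) + u mod d = u + q x\<close> exhibits \<open>u mod d\<close> as a smaller difference in \<open>T\<close>\<close>
    define q where "q = u div d"
    have "q * x \<in> T" "q * (x + d) \<in> T"
      using add_closed_nat_multiples[OF zero add] x by blast+
    moreover have "q * (x + d) + u mod d = u + q * x"
      unfolding q_def by (simp add: algebra_simps)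
    ultimately have "q * (x + d) + u mod d \<in> T"
      using add[OF u] by simp
    then have "u mod d \<in> D"
      unfolding D_def using \<open>q * (x + d) \<in> T\<close> \<open>u mod d > 0\<close> by blast
    then have "d \<le> u mod d"
      unfolding d_def by (rule Least_le)
    then show False
      using mod_less_divisor[OF x(3), of u] by linarith
  qed
  then have "d dvd Gcd T"
    by (simp add: Gcd_greatest)
  then show thesis
    using that x Gcd by simp
qed

lemma add_closed_nat_ge_square:
  fixes T :: "nat set"
  assumes zero: "0 \<in> T" and add: "\<And>x y. x \<in> T \<Longrightarrow> y \<in> T \<Longrightarrow> x + y \<in> T"
    and x: "x \<in> T" "x + 1 \<in> T" and m: "x * x \<le> m"
  shows "m \<in> T"
proof (cases "x = 0")
  case True
  then show ?thesis
    using add_closed_nat_multiples[OF zero add x(2), of m] by simp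
next
  case False
  define q r where "q = m div x" and "r = m mod x"
  have "x \<le> q"
    using div_le_mono[OF m, of x] False unfolding q_def by simp
  moreover have "r < x"
    using False unfolding r_def by simp
  ultimately have "m = (q - r) * x + r * (x + 1)"
    unfolding q_def r_def by (simp add: algebra_simps)
  then show ?thesis
    using add_closed_nat_multiples[OF zero add] x add by metis
qed

lemma add_closed_nat_Gcd_1_cofinite:
  fixes T :: "nat set"
  assumes "0 \<in> T" and "\<And>x y. x \<in> T \<Longrightarrow> y \<in> T \<Longrightarrow> x + y \<in> T" and "Gcd T = 1"
  shows "\<exists>N. \<forall>m\<ge>N. m \<in> T"
proof -
  obtain x where "x \<in> T" "x + 1 \<in> T"
    using add_closed_nat_Gcd_1_consecutive[OF assms] .
  then have "\<forall>m\<ge>x * x. m \<in> T"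
    using add_closed_nat_ge_square[OF assms(1,2)] by blast
  then show ?thesis ..
qed

definition is_cycle :: "('v \<times> 'v) set \<Rightarrow> 'v list \<Rightarrow> bool" where
  "is_cycle H vs \<longleftrightarrow> vs \<noteq> [] \<and> distinct vs \<and>
     (\<forall>i<length vs. (vs ! i, vs ! ((i + 1) mod length vs)) \<in> H)"

lemma cycle_lengths_iff: "s \<in> cycle_lengths H \<longleftrightarrow> (\<exists>vs. is_cycle H vs \<and> length vs = s)"
  unfolding cycle_lengths_def is_cycle_def by (auto simp: Suc_le_eq)

lemma is_cycle_relpow:
  assumes "is_cycle H vs" and "i < length vs"
  shows "(vs ! i, vs ! ((i + j) mod length vs)) \<in> H ^^ j"
proof (induction j)
  case (Suc j)
  have "(vs ! ((i + j) mod length vs), vs ! (((i + j) mod length vs + 1) mod length vs)) \<in> H"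
    using assms unfolding is_cycle_def by simp
  then show ?case
    using Suc by (auto simp: mod_Suc_eq intro: relpow_Suc_I)
qed (use assms in simp)

lemma is_cycle_hd_mem: "is_cycle H vs \<Longrightarrow> hd vs \<in> set vs"
  unfolding is_cycle_def by (simp add: hd_in_set)

lemma is_cycle_closed_walk:
  assumes "is_cycle H vs" and "w \<in> set vs"
  shows "(w, w) \<in> H ^^ length vs"
  using assms is_cycle_relpow[OF assms(1), of _ "length vs"] by (auto simp: in_set_conv_nth)

lemma is_cycle_walk_stays:
  assumes "is_cycle H vs" and "w \<in> set vs"
  shows "\<exists>w'\<in>set vs. (w, w') \<in> H ^^ j"
proof -
  obtain i where "i < length vs" "w = vs ! i"
    using assms(2) by (auto simp: in_set_conv_nth)
  moreover have "vs ! ((i + j) mod length vs) \<in> set vs"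
    using assms(1) unfolding is_cycle_def by simp
  ultimately show ?thesis
    using is_cycle_relpow[OF assms(1)] by blast
qed

lemma cycle_length_le_card:
  fixes H :: "('v::finite \<times> 'v) set"
  assumes "s \<in> cycle_lengths H"
  shows "s \<le> CARD('v)"
proof -
  obtain vs where "is_cycle H vs" "length vs = s"
    using assms unfolding cycle_lengths_iff by blast
  then have "card (set vs) = s"
    unfolding is_cycle_def by (simp add: distinct_card)
  then show ?thesis
    using card_mono[of UNIV "set vs"] by simp
qed

lemma strongly_connected_relpow:
  assumes "strongly_connected H"
  obtains k where "(u, v) \<in> H ^^ k"
  using assms unfolding strongly_connected_def by (meson rtrancl_power)

lemma primitive_closed_walks_Gcd:
  assumes "primitive H"
  shows "Gcd {m. (w, w) \<in> H ^^ m} = 1"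
proof -
  let ?T = "{m. (w, w) \<in> H ^^ m}"
  have "Gcd ?T dvd c" if c: "c \<in> cycle_lengths H" for c
  proof -
    obtain vs where vs: "is_cycle H vs" "length vs = c"
      using c unfolding cycle_lengths_iff by blast
    have v: "hd vs \<in> set vs"
      using vs(1) by (rule is_cycle_hd_mem)
    obtain p q where p: "(w, hd vs) \<in> H ^^ p" and q: "(hd vs, w) \<in> H ^^ q"
      using assms unfolding primitive_def by (meson strongly_connected_relpow)
    have "(w, w) \<in> H ^^ p O H ^^ q" "(w, w) \<in> H ^^ p O H ^^ c O H ^^ q"
      using p q is_cycle_closed_walk[OF vs(1) v] vs(2) by blast+
    then have "p + q \<in> ?T" "p + c + q \<in> ?T"
      by (simp_all add: relpow_add O_assoc)
    then have "Gcd ?T dvd p + q" "Gcd ?T dvd p + q + c"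
      by (auto simp: add.commute add.left_commute intro: Gcd_dvd)
    then show ?thesis
      by (simp add: dvd_add_right_iff)
  qed
  then have "Gcd ?T dvd Gcd (cycle_lengths H)"
    by (simp add: Gcd_greatest)
  then show ?thesis
    using assms unfolding primitive_def by simp
qed

lemma primitive_closed_walks_cofinite:
  assumes "primitive H"
  shows "\<exists>N. \<forall>m\<ge>N. (w, w) \<in> H ^^ m"
proof (rule add_closed_nat_Gcd_1_cofinite[of "{m. (w, w) \<in> H ^^ m}", simplified])
  show "(w, w) \<in> H ^^ (x + y)" if "(w, w) \<in> H ^^ x" "(w, w) \<in> H ^^ y" for x y
    using that by (auto simp: relpow_add)
qed (use primitive_closed_walks_Gcd[OF assms] in simp)

lemma strongly_connected_reaches_cycle:
  fixes H :: "('v::finite \<times> 'v) set"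
  assumes sc: "strongly_connected H" and cyc: "is_cycle H vs"
  shows "\<exists>y\<in>set vs. (u, y) \<in> H ^^ (CARD('v) - length vs)"
proof -
  have image: "(H\<inverse> ^^ k) `` set vs = {u. \<exists>y\<in>set vs. (u, y) \<in> H ^^ k}" for k
    by (auto simp: relpow_converse)
  have "(H\<inverse> ^^ (CARD('v) - card (set vs))) `` set vs = UNIV"
  proof (rule relpow_Image_eq_UNIV)
    show "set vs \<subseteq> H\<inverse> `` set vs"
      using is_cycle_walk_stays[OF cyc, of _ 1] by auto
    show "\<exists>k. v \<in> (H\<inverse> ^^ k) `` set vs" for v
    proof -
      obtain k where "(v, hd vs) \<in> H ^^ k"
        using sc by (rule strongly_connected_relpow)
      then show ?thesis
        unfolding image using is_cycle_hd_mem[OF cyc] by blast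
    qed
  qed
  moreover have "card (set vs) = length vs"
    using cyc unfolding is_cycle_def by (simp add: distinct_card)
  ultimately show ?thesis
    unfolding image by auto
qed

lemma primitive_walks_from_cycle:
  fixes H :: "('v::finite \<times> 'v) set"
  assumes prim: "primitive H" and cyc: "is_cycle H vs" and w: "w \<in> set vs"
  shows "(w, v) \<in> H ^^ ((CARD('v) - 1) * length vs)"
proof -
  let ?s = "length vs"
  have image: "((H ^^ ?s) ^^ k) `` {w} = {v. (w, v) \<in> H ^^ (k * ?s)}" for k
    by (auto simp: relpow_mult mult.commute)
  have "((H ^^ ?s) ^^ (CARD('v) - card {w})) `` {w} = UNIV"
  proof (rule relpow_Image_eq_UNIV)
    show "{w} \<subseteq> (H ^^ ?s) `` {w}"
      using is_cycle_closed_walk[OF cyc w] by blast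
    show "\<exists>k. v \<in> ((H ^^ ?s) ^^ k) `` {w}" for v
    proof -
      obtain q where q: "(w, v) \<in> H ^^ q"
        using prim unfolding primitive_def by (meson strongly_connected_relpow)
      obtain N where N: "\<forall>m\<ge>N. (w, w) \<in> H ^^ m"
        using primitive_closed_walks_cofinite[OF prim] by blast
      have "?s \<ge> 1"
        using cyc unfolding is_cycle_def by (simp add: Suc_le_eq)
      then have "N + q \<le> (N + q) * ?s"
        by simp
      then have "N \<le> (N + q) * ?s - q"
        by linarith
      then have "(w, w) \<in> H ^^ ((N + q) * ?s - q)"
        using N by blast
      then have "(w, v) \<in> H ^^ ((N + q) * ?s - q + q)"
        using q by (auto simp: relpow_add)
      then show ?thesis
        unfolding image using \<open>N + q \<le> (N + q) * ?s\<close> by auto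
    qed
  qed
  then show ?thesis
    unfolding image by auto
qed

lemma primitive_relpow_complete:
  fixes H :: "('v::finite \<times> 'v) set"
  assumes prim: "primitive H" and s: "s \<in> cycle_lengths H"
    and m: "(CARD('v) - s) + (CARD('v) - 1) * s \<le> m"
  shows "(u, v) \<in> H ^^ m"
proof -
  let ?E = "(CARD('v) - s) + (CARD('v) - 1) * s"
  obtain vs where cyc: "is_cycle H vs" and len: "length vs = s"
    using s unfolding cycle_lengths_iff by blast
  obtain y where "y \<in> set vs" and uy: "(u, y) \<in> H ^^ (CARD('v) - s)"
    using strongly_connected_reaches_cycle[OF _ cyc] prim len unfolding primitive_def by blast
  then obtain y' where "y' \<in> set vs" and yy': "(y, y') \<in> H ^^ (m - ?E)"
    using is_cycle_walk_stays[OF cyc] by blast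
  then have "(y', v) \<in> H ^^ ((CARD('v) - 1) * s)"
    using primitive_walks_from_cycle[OF prim cyc] len by blast
  with uy yy' have "(u, v) \<in> H ^^ ((CARD('v) - s) + (m - ?E) + (CARD('v) - 1) * s)"
    by (auto simp: relpow_add)
  then show ?thesis
    using m by simp
qed

lemma primitive_short_cycle:
  fixes H :: "('v::finite \<times> 'v) set"
  assumes prim: "primitive H"
  obtains s where "s \<in> cycle_lengths H" and "s + 1 \<le> max 2 CARD('v)"
proof (cases "\<exists>s\<in>cycle_lengths H. s < CARD('v)")
  case True
  then show ?thesis
    using that by fastforce
next
  case False
  have Gcd: "Gcd (cycle_lengths H) = 1"
    using prim unfolding primitive_def by simp
  then have "cycle_lengths H \<noteq> {}"
    by auto
  moreover have "cycle_lengths H \<subseteq> {CARD('v)}"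
    using False cycle_length_le_card[of _ H] by force
  ultimately have "cycle_lengths H = {CARD('v)}"
    by blast
  then have "CARD('v) = 1"
    using Gcd by simp
  then show ?thesis
    using that \<open>cycle_lengths H = {CARD('v)}\<close> by simp
qed

definition and_net :: "('v \<times> 'v) set \<Rightarrow> 'v \<Rightarrow> 'v \<Rightarrow> ('v \<Rightarrow> bool) \<Rightarrow> ('v \<Rightarrow> bool)" where
  "and_net G a b x i \<longleftrightarrow> (\<forall>j. (j, i) \<in> G \<longrightarrow> (if (j, i) = (a, b) then \<not> x j else x j))"

lemma interaction_graph_and_net: "interaction_graph (and_net G a b) = G"
proof (intro set_eqI iffI)
  fix p
  assume "p \<in> interaction_graph (and_net G a b)"
  then obtain j i x where p: "p = (j, i)" and "and_net G a b x i \<noteq> and_net G a b (x(j := \<not> x j)) i"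
    unfolding interaction_graph_def depends_on_def by blast
  then show "p \<in> G"
    unfolding and_net_def by (metis fun_upd_other)
next
  fix p
  assume G: "p \<in> G"
  obtain j i where p: "p = (j, i)"
    by fastforce
  \<comment> \<open>all literals of \<open>i\<close> true at \<open>x\<close>; flipping \<open>x j\<close> falsifies the literal on \<open>(j, i)\<close>\<close>
  define x where "x k \<longleftrightarrow> (k, i) \<noteq> (a, b)" for k
  have "and_net G a b x i" "\<not> and_net G a b (x(j := \<not> x j)) i"
    using G unfolding p and_net_def x_def by auto
  then show "p \<in> interaction_graph (and_net G a b)"
    unfolding p interaction_graph_def depends_on_def by auto
qed

lemma and_net_D: "and_net G a b x i \<Longrightarrow> (j, i) \<in> G - {(a, b)} \<Longrightarrow> x j"
  unfolding and_net_def by (metis DiffD1 DiffD2 singletonI)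

lemma and_net_negated_arc_D: "and_net G a b x b \<Longrightarrow> (a, b) \<in> G \<Longrightarrow> \<not> x a"
  unfolding and_net_def by (metis (full_types))

lemma and_net_relpow_backwards:
  assumes H: "H \<subseteq> G - {(a, b)}" and walk: "(j, i) \<in> H ^^ k"
    and "(and_net G a b ^^ (t + k)) x i"
  shows "(and_net G a b ^^ t) x j"
  using walk assms(3)
proof (induction k arbitrary: i)
  case (Suc k)
  from Suc.prems(1) obtain y where jy: "(j, y) \<in> H ^^ k" and yi: "(y, i) \<in> H"
    by (rule relpow_Suc_E)
  have "and_net G a b ((and_net G a b ^^ (t + k)) x) i"
    using Suc.prems(2) by simp
  moreover have "(y, i) \<in> G - {(a, b)}"
    using yi H by blast
  ultimately have "(and_net G a b ^^ (t + k)) x y"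
    by (rule and_net_D)
  with jy show ?case
    by (rule Suc.IH)
qed simp

lemma and_net_funpow_false:
  assumes H: "H \<subseteq> G - {(a, b)}" and ab: "(a, b) \<in> G"
    and E: "\<And>u v. (u, v) \<in> H ^^ E" and E': "\<And>u v. (u, v) \<in> H ^^ Suc E"
  shows "(and_net G a b ^^ Suc E) x = (\<lambda>_. False)"
proof
  fix i
  show "(and_net G a b ^^ Suc E) x i = False"
  proof (rule ccontr)
    assume "(and_net G a b ^^ Suc E) x i \<noteq> False"
    then have i: "(and_net G a b ^^ Suc E) x i"
      by simp
    have "(and_net G a b ^^ (1 + E)) x i"
      using i by simp
    then have "(and_net G a b ^^ 1) x b"
      by (rule and_net_relpow_backwards[OF H E[of b i]])
    then have "\<not> x a"
      using and_net_negated_arc_D[OF _ ab] by simp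
    have "(and_net G a b ^^ (0 + Suc E)) x i"
      using i by simp
    then have "(and_net G a b ^^ 0) x a"
      by (rule and_net_relpow_backwards[OF H E'[of a i]])
    with \<open>\<not> x a\<close> show False
      by simp
  qed
qed

lemma nilpotent_atD:
  assumes "nilpotent_at f k"
  shows "nilpotent f" and "nil_class f \<le> k"
  using assms unfolding nilpotent_def nil_class_def by (blast, rule Least_le)

lemma Dulmage_Mendelsohn_bound_le:
  fixes n s :: nat
  assumes "1 \<le> s" and "s + 1 \<le> max 2 n"
  shows "(n - s) + (n - 1) * s + 1 \<le> n\<^sup>2 + 3 - 2 * n"
proof (cases "n \<le> 1")
  case True
  then have "s = 1"
    using assms by (simp add: max_def)
  from True consider "n = 0" | "n = 1"
    by linarith
  then show ?thesis
    using \<open>s = 1\<close> by cases simp_all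
next
  case False
  define k where "k = n - 2"
  have n: "n = k + 2"
    using False unfolding k_def by simp
  then have "s \<le> k + 1"
    using assms(2) by simp
  then have "k * s \<le> k * (k + 1)"
    by (rule mult_le_mono2)
  moreover have "(n - s) + (n - 1) * s + 1 = k + 3 + k * s"
    using \<open>s \<le> k + 1\<close> unfolding n by (simp add: algebra_simps)
  moreover have "n\<^sup>2 + 3 - 2 * n = k * k + 2 * k + 3"
    unfolding n by (simp add: power2_eq_square algebra_simps)
  ultimately show ?thesis
    by (simp add: algebra_simps)
qed

theorem proposition7:
  fixes G :: "('v::finite \<times> 'v) set"
  assumes "\<exists>H. H \<subset> G \<and> primitive H"
  shows "\<exists>f :: ('v \<Rightarrow> bool) \<Rightarrow> ('v \<Rightarrow> bool).
           admits G f \<and> nilpotent f \<and>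
           nil_class f \<le> (CARD('v))\<^sup>2 + 3 - 2 * CARD('v)"
proof -
  obtain H where "H \<subset> G" and prim: "primitive H"
    using assms by blast
  then obtain a b where ab: "(a, b) \<in> G" and "(a, b) \<notin> H"
    by auto
  with \<open>H \<subset> G\<close> have H: "H \<subseteq> G - {(a, b)}"
    by blast
  obtain s where s: "s \<in> cycle_lengths H" and short: "s + 1 \<le> max 2 CARD('v)"
    using primitive_short_cycle[OF prim] by blast
  define E where "E = (CARD('v) - s) + (CARD('v) - 1) * s"
  have walk: "(u, v) \<in> H ^^ m" if "E \<le> m" for u v m
    using primitive_relpow_complete[OF prim s] that unfolding E_def .
  have nil: "nilpotent_at (and_net G a b) (Suc E)"
    unfolding nilpotent_at_def
    using and_net_funpow_false[OF H ab walk[OF order_refl] walk[OF le_SucI[OF order_refl]]] by blast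
  have "1 \<le> s"
    using s unfolding cycle_lengths_def by blast
  then have bound: "Suc E \<le> (CARD('v))\<^sup>2 + 3 - 2 * CARD('v)"
    using Dulmage_Mendelsohn_bound_le[OF _ short] unfolding E_def by simp
  show ?thesis
  proof (intro exI conjI)
    show "admits G (and_net G a b)"
      unfolding admits_def by (rule interaction_graph_and_net)
    show "nilpotent (and_net G a b)"
      using nil by (rule nilpotent_atD(1))
    show "nil_class (and_net G a b) \<le> (CARD('v))\<^sup>2 + 3 - 2 * CARD('v)"
      using nilpotent_atD(2)[OF nil] bound by (rule order_trans)
  qed
qed

end
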